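(* Let $n\ge2$, $p\in(1,2)\cup(2,\infty)$. Let $\Omega\subset\mathbb{R}^n$ be a domain, $T>0$, $u$ a viscosity solution of $u_t-\Delta u-(p-2)\frac{\langle D^2uDu,Du\rangle}{|Du|^2}=0$ in $\Omega\times(0,T)$, $U\Subset\Omega$ a smooth domain, $U_T=U\times(0,T)$, $\varepsilon\in(0,1]$, and let $u^\varepsilon\in C^0(\overline{U_T})\cap C^\infty(U_T)$ be the viscosity solution of $u^\varepsilon_t-\Delta u^\varepsilon-(p-2)\frac{\langle D^2u^\varepsilon Du^\varepsilon,Du^\varepsilon\rangle}{|Du^\varepsilon|^2+\varepsilon}=0$ in $U_T$ with $u^\varepsilon=u$ on the parabolic boundary of $U_T$. Let $Q_{2r}=(s-4r^2,s)\times B(z,2r)\Subset U_T$ and $\phi\in C_c^\infty(B(z,2r)\times(s-4r^2,s+4r^2))$. Then for any $\vec c\in\mathbb{R}^n$ and $\eta>0$, $$\int_{Q_{2r}}\Delta u^\varepsilon\,u^\varepsilon_t\,\phi^2\,dx\,dt\le\eta\int_{Q_{2r}}|D^2u^\varepsilon|^2\phi^2\,dx\,dt+\frac{C}{\eta}\int_{Q_{2r}}|Du^\varepsilon-\vec c|^2\big[|D\phi|^2+|\phi\phi_t|\big]\,dx\,dt,$$ where $C$ depends only on $n$ and $p$.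
   Context: $D$, $D^2$ denote spatial derivatives. *)

theory Defs
  imports "HOL-Analysis.Analysis"
begin

definition pdir :: "'a::euclidean_space \<Rightarrow> ('a \<Rightarrow> real) \<Rightarrow> 'a \<Rightarrow> real" where
  "pdir v f z = deriv (\<lambda>h. f (z + h *\<^sub>R v)) 0"

fun pdl :: "'a::euclidean_space list \<Rightarrow> ('a \<Rightarrow> real) \<Rightarrow> 'a \<Rightarrow> real" where
  "pdl [] f = f"
| "pdl (v # vs) f = pdir v (pdl vs f)"

definition Ck_on :: "nat \<Rightarrow> 'a::euclidean_space set \<Rightarrow> ('a \<Rightarrow> real) \<Rightarrow> bool" where
  "Ck_on k S f \<longleftrightarrow>
     (\<forall>vs. set vs \<subseteq> Basis \<and> length vs \<le> k \<longrightarrow>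
        continuous_on S (pdl vs f) \<and>
        (length vs < k \<longrightarrow> (\<forall>v\<in>Basis. \<forall>z\<in>S.
            ((\<lambda>h. pdl vs f (z + h *\<^sub>R v)) has_real_derivative pdl (v # vs) f z) (at 0))))"

definition smooth_on :: "'a::euclidean_space set \<Rightarrow> ('a \<Rightarrow> real) \<Rightarrow> bool" where
  "smooth_on S f \<longleftrightarrow> (\<forall>k. Ck_on k S f)"

definition Cc_inf :: "'a::euclidean_space set \<Rightarrow> ('a \<Rightarrow> real) \<Rightarrow> bool" where
  "Cc_inf S f \<longleftrightarrow> smooth_on S f \<and> compact (closure {z. f z \<noteq> 0})
                   \<and> closure {z. f z \<noteq> 0} \<subseteq> S"

definition sdir :: "'n::finite \<Rightarrow> (real^'n) \<times> real" where
  "sdir i = (axis i 1, 0)"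

definition Dx :: "((real^'n::finite) \<times> real \<Rightarrow> real) \<Rightarrow> (real^'n) \<times> real \<Rightarrow> real^'n" where
  "Dx f z = (\<chi> i. pdl [sdir i] f z)"

definition D2x :: "((real^'n::finite) \<times> real \<Rightarrow> real) \<Rightarrow> (real^'n) \<times> real \<Rightarrow> real^'n^'n" where
  "D2x f z = (\<chi> i j. pdl [sdir i, sdir j] f z)"

definition Dt :: "((real^'n::finite) \<times> real \<Rightarrow> real) \<Rightarrow> (real^'n) \<times> real \<Rightarrow> real" where
  "Dt f z = pdl [(0, 1)] f z"

definition Lap :: "((real^'n::finite) \<times> real \<Rightarrow> real) \<Rightarrow> (real^'n) \<times> real \<Rightarrow> real" where
  "Lap f z = trace (D2x f z)"

text \<open>For eps > 0 the operator
  a - tr X - (p-2) <X q, q> / (|q|^2 + eps)  is continuous; for eps = 0 it is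
  singular at q = 0, and (as usual) the semicontinuous envelopes are used there,
  which amounts to testing with  a - tr X - (p-2) <X e, e>  for all unit vectors e.\<close>

definition visc_super :: "real \<Rightarrow> real \<Rightarrow> ((real^'n::finite) \<times> real) set
                          \<Rightarrow> ((real^'n) \<times> real \<Rightarrow> real) \<Rightarrow> bool" where
  "visc_super p eps S u \<longleftrightarrow>
    (\<forall>z0\<in>S. \<forall>N \<phi>. open N \<and> z0 \<in> N \<and> N \<subseteq> S \<and> Ck_on 2 N \<phi> \<and> \<phi> z0 = u z0
        \<and> (\<forall>z\<in>N. \<phi> z \<le> u z) \<longrightarrow>
      (if eps > 0 \<or> Dx \<phi> z0 \<noteq> 0
       then Dt \<phi> z0 - Lap \<phi> z0
              - (p - 2) * (((D2x \<phi> z0) *v (Dx \<phi> z0)) \<bullet> Dx \<phi> z0) / ((norm (Dx \<phi> z0))\<^sup>2 + eps) \<ge> 0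
       else (\<forall>e. norm e = 1 \<longrightarrow>
               Dt \<phi> z0 - Lap \<phi> z0 - (p - 2) * (((D2x \<phi> z0) *v e) \<bullet> e) \<ge> 0)))"

definition visc_sub :: "real \<Rightarrow> real \<Rightarrow> ((real^'n::finite) \<times> real) set
                          \<Rightarrow> ((real^'n) \<times> real \<Rightarrow> real) \<Rightarrow> bool" where
  "visc_sub p eps S u \<longleftrightarrow>
    (\<forall>z0\<in>S. \<forall>N \<phi>. open N \<and> z0 \<in> N \<and> N \<subseteq> S \<and> Ck_on 2 N \<phi> \<and> \<phi> z0 = u z0
        \<and> (\<forall>z\<in>N. \<phi> z \<ge> u z) \<longrightarrow>
      (if eps > 0 \<or> Dx \<phi> z0 \<noteq> 0
       then Dt \<phi> z0 - Lap \<phi> z0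
              - (p - 2) * (((D2x \<phi> z0) *v (Dx \<phi> z0)) \<bullet> Dx \<phi> z0) / ((norm (Dx \<phi> z0))\<^sup>2 + eps) \<le> 0
       else (\<forall>e. norm e = 1 \<longrightarrow>
               Dt \<phi> z0 - Lap \<phi> z0 - (p - 2) * (((D2x \<phi> z0) *v e) \<bullet> e) \<le> 0)))"

definition visc_sol :: "real \<Rightarrow> real \<Rightarrow> ((real^'n::finite) \<times> real) set
                          \<Rightarrow> ((real^'n) \<times> real \<Rightarrow> real) \<Rightarrow> bool" where
  "visc_sol p eps S u \<longleftrightarrow> continuous_on S u \<and> visc_super p eps S u \<and> visc_sub p eps S u"

definition domain :: "'a::euclidean_space set \<Rightarrow> bool" where
  "domain \<Omega> \<longleftrightarrow> open \<Omega> \<and> connected \<Omega> \<and> \<Omega> \<noteq> {}"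

definition smooth_domain :: "(real^'n::finite) set \<Rightarrow> bool" where
  "smooth_domain U \<longleftrightarrow> domain U \<and>
     (\<forall>x\<in>frontier U. \<exists>\<rho>>0. \<exists>\<psi>. smooth_on (ball x \<rho>) \<psi>
        \<and> (\<forall>y\<in>ball x \<rho>. (\<chi> i. pdl [axis i 1] \<psi> y) \<noteq> 0)
        \<and> U \<inter> ball x \<rho> = {y\<in>ball x \<rho>. \<psi> y < 0})"

definition compactly_contained :: "'a::euclidean_space set \<Rightarrow> 'a set \<Rightarrow> bool" where
  "compactly_contained A B \<longleftrightarrow> bounded A \<and> closure A \<subseteq> B"

definition par_boundary :: "(real^'n::finite) set \<Rightarrow> real \<Rightarrow> ((real^'n) \<times> real) set" where
  "par_boundary U T = (closure U \<times> {0}) \<union> (frontier U \<times> {0..T})"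

end

theory Submission
  imports Defs
begin

text \<open>
  Since \<open>u\<^sup>\<epsilon>\<close> is smooth, it solves the regularized equation classically, and the
  quotient \<open>\<langle>D\<^sup>2u Du, Du\<rangle> / (|Du|\<^sup>2 + \<epsilon>)\<close> is bounded by \<open>|D\<^sup>2u|\<close>; hence
  \<open>|u\<^sub>t| \<le> K |D\<^sup>2u|\<close> with \<open>K = n + |p - 2|\<close>, and \<open>|\<Delta>u| \<le> n |D\<^sup>2u|\<close>.
  If \<open>\<eta> \<ge> n K\<close> the estimate therefore holds pointwise.
  Otherwise integrate by parts in \<open>x\<^sub>i\<close>:
  \<open>\<integral> u\<^sub>i\<^sub>i u\<^sub>t \<phi>\<^sup>2 = - \<integral> (u\<^sub>i - c\<^sub>i) u\<^sub>t\<^sub>i \<phi>\<^sup>2 - 2 \<integral> (u\<^sub>i - c\<^sub>i) u\<^sub>t \<phi> \<phi>\<^sub>i\<close>,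
  and \<open>(u\<^sub>i - c\<^sub>i) u\<^sub>i\<^sub>t \<phi>\<^sup>2 = \<partial>\<^sub>t ((u\<^sub>i - c\<^sub>i)\<^sup>2 \<phi>\<^sup>2) / 2 - (u\<^sub>i - c\<^sub>i)\<^sup>2 \<phi> \<phi>\<^sub>t\<close>
  (by Schwarz, \<open>u\<^sub>t\<^sub>i = u\<^sub>i\<^sub>t\<close>). Integrating the time derivative leaves only the
  nonnegative value at the top of the cylinder, since \<open>\<phi>\<close> vanishes near its bottom. What remains,
  \<open>\<integral> |Du - c|\<^sup>2 \<phi> \<phi>\<^sub>t - 2 ((Du - c) \<cdot> D\<phi>) u\<^sub>t \<phi>\<close>, is bounded by Cauchy-Schwarz
  and Young's inequality, giving \<open>C = n K + K\<^sup>2\<close>.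
\<close>

section \<open>Partial derivatives\<close>

lemma eventually_line_in_open:
  fixes w :: "'a::real_normed_vector"
  assumes "open W" "w \<in> W"
  shows "\<forall>\<^sub>F h in nhds (0::real). w + h *\<^sub>R v \<in> W"
proof -
  have "((\<lambda>h::real. w + h *\<^sub>R v) \<longlongrightarrow> w + 0 *\<^sub>R v) (at 0)"
    by (intro tendsto_intros)
  then have "\<forall>\<^sub>F h in at (0::real). w + h *\<^sub>R v \<in> W"
    using topological_tendstoD[OF _ assms(1)] assms(2) by auto
  then show ?thesis using assms(2) by (simp add: eventually_nhds_conv_at)
qed

lemma line_derivative_zero_on_open:
  fixes F :: "'a::real_normed_vector \<Rightarrow> real"
  assumes "open W" "w \<in> W" "\<And>y. y \<in> W \<Longrightarrow> F y = 0"
  shows "((\<lambda>h. F (w + h *\<^sub>R v)) has_real_derivative 0) (at 0)"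
proof -
  have "\<forall>\<^sub>F h in nhds 0. F (w + h *\<^sub>R v) = 0"
    using eventually_line_in_open[OF assms(1,2), of v] assms(3) by (auto elim: eventually_mono)
  then show ?thesis
    using DERIV_cong_ev[of 0 0 "\<lambda>h. F (w + h *\<^sub>R v)" "\<lambda>_. 0" 0 0] by simp
qed

lemma isCont_zero_on_open:
  assumes "open W" "w \<in> W" "\<And>y. y \<in> W \<Longrightarrow> F y = 0"
  shows "isCont F w"
proof -
  have "continuous_on W F"
    using continuous_on_cong[of W W F "\<lambda>_. 0"] assms(3) by simp
  then show ?thesis using assms(1,2) continuous_on_eq_continuous_at by blast
qed

lemma pdl_zero_on_open:
  assumes "open W" "\<And>y. y \<in> W \<Longrightarrow> f y = 0" "y \<in> W"
  shows "pdl vs f y = 0"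
  using assms(3)
proof (induction vs arbitrary: y)
  case (Cons v vs)
  have "((\<lambda>h. pdl vs f (y + h *\<^sub>R v)) has_real_derivative 0) (at 0)"
    by (rule line_derivative_zero_on_open[OF assms(1) Cons.prems Cons.IH])
  then show ?case by (simp add: pdir_def DERIV_imp_deriv)
qed (use assms(2) in simp)

lemma smooth_on_isCont_pdl:
  assumes "smooth_on S f" "open S" "set vs \<subseteq> Basis" "w \<in> S"
  shows "isCont (pdl vs f) w"
proof -
  have "Ck_on (length vs) S f" using assms(1) by (simp add: smooth_on_def)
  then have "continuous_on S (pdl vs f)" using assms(3) by (simp add: Ck_on_def)
  then show ?thesis using assms(2,4) continuous_on_eq_continuous_at by blast
qed

lemma smooth_on_has_pdl_derivative:
  assumes "smooth_on S f" "set vs \<subseteq> Basis" "v \<in> Basis" "w \<in> S"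
  shows "((\<lambda>h. pdl vs f (w + h *\<^sub>R v)) has_real_derivative pdl (v # vs) f w) (at 0)"
proof -
  have "Ck_on (Suc (length vs)) S f" using assms(1) by (simp add: smooth_on_def)
  then show ?thesis using assms(2-4) unfolding Ck_on_def by auto
qed

lemma DERIV_along_line:
  fixes F :: "'a::real_normed_vector \<Rightarrow> real"
  assumes "((\<lambda>k. F (q t + k *\<^sub>R v)) has_real_derivative D) (at 0)"
    and "\<And>t k. q (t + k) = q t + k *\<^sub>R v"
  shows "((\<lambda>t. F (q t)) has_real_derivative D) (at t)"
proof -
  have "(\<lambda>k. F (q (k + t))) = (\<lambda>k. F (q t + k *\<^sub>R v))"
    by (metis assms(2) add.commute)
  then show ?thesis
    using assms(1) DERIV_shift[of "\<lambda>t. F (q t)" D 0 t] by simp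
qed

lemma second_difference_mean_value:
  fixes f f1 f12 :: "'a::real_normed_vector \<Rightarrow> real"
  assumes h: "h > 0"
    and rect: "\<And>a b. a \<in> {0..h} \<Longrightarrow> b \<in> {0..h} \<Longrightarrow> w + a *\<^sub>R v1 + b *\<^sub>R v2 \<in> S"
    and d1: "\<And>y. y \<in> S \<Longrightarrow> ((\<lambda>k. f (y + k *\<^sub>R v1)) has_real_derivative f1 y) (at 0)"
    and d12: "\<And>y. y \<in> S \<Longrightarrow> ((\<lambda>k. f1 (y + k *\<^sub>R v2)) has_real_derivative f12 y) (at 0)"
  obtains \<alpha> \<beta> where "\<alpha> \<in> {0<..<h}" "\<beta> \<in> {0<..<h}"
    "f (w + h *\<^sub>R v1 + h *\<^sub>R v2) - f (w + h *\<^sub>R v1) - f (w + h *\<^sub>R v2) + f w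
       = h * h * f12 (w + \<alpha> *\<^sub>R v1 + \<beta> *\<^sub>R v2)"
proof -
  define P where "P a b = w + a *\<^sub>R v1 + b *\<^sub>R v2" for a b
  have shift_a: "P (a + k) b = P a b + k *\<^sub>R v1" and shift_b: "P a (b + k) = P a b + k *\<^sub>R v2"
    for a b k by (simp_all add: P_def scaleR_add_left algebra_simps)
  have Da: "((\<lambda>a. f (P a b)) has_real_derivative f1 (P a b)) (at a)"
    if "a \<in> {0..h}" "b \<in> {0..h}" for a b
    by (rule DERIV_along_line[OF d1, OF rect[OF that, folded P_def] shift_a])
  have Db: "((\<lambda>b. f1 (P a b)) has_real_derivative f12 (P a b)) (at b)"
    if "a \<in> {0..h}" "b \<in> {0..h}" for a b
    by (rule DERIV_along_line[OF d12, OF rect[OF that, folded P_def] shift_b])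
  have "\<exists>\<alpha>>0. \<alpha> < h \<and> (f (P h h) - f (P h 0)) - (f (P 0 h) - f (P 0 0))
      = (h - 0) * (f1 (P \<alpha> h) - f1 (P \<alpha> 0))"
    by (rule MVT2[OF h, of "\<lambda>a. f (P a h) - f (P a 0)"]) (use Da h in \<open>auto intro!: DERIV_diff\<close>)
  then obtain \<alpha> where \<alpha>: "0 < \<alpha>" "\<alpha> < h"
    "(f (P h h) - f (P h 0)) - (f (P 0 h) - f (P 0 0)) = h * (f1 (P \<alpha> h) - f1 (P \<alpha> 0))"
    by auto
  have "\<exists>\<beta>>0. \<beta> < h \<and> f1 (P \<alpha> h) - f1 (P \<alpha> 0) = (h - 0) * f12 (P \<alpha> \<beta>)"
    by (rule MVT2[OF h]) (use Db \<alpha> in auto)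
  then obtain \<beta> where \<beta>: "0 < \<beta>" "\<beta> < h" "f1 (P \<alpha> h) - f1 (P \<alpha> 0) = h * f12 (P \<alpha> \<beta>)"
    by auto
  show ?thesis
    by (rule that[of \<alpha> \<beta>]) (use \<alpha> \<beta> in \<open>auto simp: P_def\<close>)
qed

text \<open>Both mixed derivatives are limits of the same second difference divided by \<open>h\<^sup>2\<close>.\<close>

lemma partial_derivatives_commute:
  fixes f f1 f2 f12 f21 :: "'a::real_normed_vector \<Rightarrow> real"
  assumes S: "open S" "w \<in> S"
    and d1: "\<And>y. y \<in> S \<Longrightarrow> ((\<lambda>k. f (y + k *\<^sub>R v1)) has_real_derivative f1 y) (at 0)"
    and d2: "\<And>y. y \<in> S \<Longrightarrow> ((\<lambda>k. f (y + k *\<^sub>R v2)) has_real_derivative f2 y) (at 0)"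
    and d12: "\<And>y. y \<in> S \<Longrightarrow> ((\<lambda>k. f1 (y + k *\<^sub>R v2)) has_real_derivative f12 y) (at 0)"
    and d21: "\<And>y. y \<in> S \<Longrightarrow> ((\<lambda>k. f2 (y + k *\<^sub>R v1)) has_real_derivative f21 y) (at 0)"
    and c12: "isCont f12 w" and c21: "isCont f21 w"
  shows "f12 w = f21 w"
proof -
  have "\<bar>f12 w - f21 w\<bar> < e" if e: "e > 0" for e
  proof -
    have "\<forall>\<^sub>F y in nhds w. y \<in> S \<and> dist (f12 y) (f12 w) < e/2 \<and> dist (f21 y) (f21 w) < e/2"
      using c12 c21 unfolding isCont_def tendsto_at_iff_tendsto_nhds
      by (intro eventually_conj eventually_nhds_in_open[OF S] tendstoD) (use e in auto)
    then obtain \<delta> where \<delta>: "\<delta> > 0"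
      and near: "\<And>y. dist y w < \<delta> \<Longrightarrow> y \<in> S \<and> dist (f12 y) (f12 w) < e/2 \<and> dist (f21 y) (f21 w) < e/2"
      unfolding eventually_nhds_metric by blast
    define h where "h = \<delta> / (norm v1 + norm v2 + 1)"
    have np: "norm v1 + norm v2 + 1 > 0" by (simp add: add_nonneg_pos)
    then have h: "h > 0" using \<delta> by (simp add: h_def)
    have rect: "dist (w + a *\<^sub>R v1 + b *\<^sub>R v2) w < \<delta>" if "a \<in> {0..h}" "b \<in> {0..h}" for a b
    proof -
      have "dist (w + a *\<^sub>R v1 + b *\<^sub>R v2) w \<le> a * norm v1 + b * norm v2"
        using that norm_triangle_ineq[of "a *\<^sub>R v1" "b *\<^sub>R v2"] by (simp add: dist_norm add.assoc)
      also have "\<dots> \<le> h * (norm v1 + norm v2)"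
        using that by (simp add: distrib_left add_mono mult_right_mono)
      also have "\<dots> < h * (norm v1 + norm v2 + 1)" using h by simp
      also have "\<dots> = \<delta>" using np by (simp add: h_def)
      finally show ?thesis .
    qed
    have rect': "w + b *\<^sub>R v2 + a *\<^sub>R v1 = w + a *\<^sub>R v1 + b *\<^sub>R v2" for a b
      by (simp add: algebra_simps)
    obtain \<alpha> \<beta> where \<alpha>\<beta>: "\<alpha> \<in> {0<..<h}" "\<beta> \<in> {0<..<h}"
      and \<Delta>12: "f (w + h *\<^sub>R v1 + h *\<^sub>R v2) - f (w + h *\<^sub>R v1) - f (w + h *\<^sub>R v2) + f w
                 = h * h * f12 (w + \<alpha> *\<^sub>R v1 + \<beta> *\<^sub>R v2)"
      using second_difference_mean_value[OF h _ d1 d12] near rect by blast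
    obtain \<beta>' \<alpha>' where \<alpha>\<beta>': "\<beta>' \<in> {0<..<h}" "\<alpha>' \<in> {0<..<h}"
      and \<Delta>21: "f (w + h *\<^sub>R v1 + h *\<^sub>R v2) - f (w + h *\<^sub>R v2) - f (w + h *\<^sub>R v1) + f w
                 = h * h * f21 (w + \<alpha>' *\<^sub>R v1 + \<beta>' *\<^sub>R v2)"
      using second_difference_mean_value[OF h _ d2 d21] near rect rect' by metis
    have "h * h * f12 (w + \<alpha> *\<^sub>R v1 + \<beta> *\<^sub>R v2) = h * h * f21 (w + \<alpha>' *\<^sub>R v1 + \<beta>' *\<^sub>R v2)"
      using \<Delta>12 \<Delta>21 by linarith
    then have "f12 (w + \<alpha> *\<^sub>R v1 + \<beta> *\<^sub>R v2) = f21 (w + \<alpha>' *\<^sub>R v1 + \<beta>' *\<^sub>R v2)"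
      using h by simp
    moreover have "dist (f12 (w + \<alpha> *\<^sub>R v1 + \<beta> *\<^sub>R v2)) (f12 w) < e/2"
      using near rect \<alpha>\<beta> by simp
    moreover have "dist (f21 (w + \<alpha>' *\<^sub>R v1 + \<beta>' *\<^sub>R v2)) (f21 w) < e/2"
      using near rect \<alpha>\<beta>' by simp
    ultimately show ?thesis unfolding dist_real_def by linarith
  qed
  from this[of "\<bar>f12 w - f21 w\<bar>"] show ?thesis by linarith
qed

lemma pdl_eq_0_outside_support:
  assumes "w \<notin> closure {x. \<phi> x \<noteq> 0}"
  shows "pdl vs \<phi> w = 0"
  by (rule pdl_zero_on_open[of "- closure {x. \<phi> x \<noteq> 0}"])
    (use assms closure_subset[of "{x. \<phi> x \<noteq> 0}"] in auto)

lemma Cc_inf_isCont_pdl: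
  assumes "Cc_inf S \<phi>" "open S" "set vs \<subseteq> Basis"
  shows "isCont (pdl vs \<phi>) w"
proof (cases "w \<in> S")
  case True
  then show ?thesis using smooth_on_isCont_pdl assms by (auto simp: Cc_inf_def)
next
  case False
  then have "w \<in> - closure {x. \<phi> x \<noteq> 0}" using assms(1) by (auto simp: Cc_inf_def)
  then show ?thesis
    by (rule isCont_zero_on_open[OF open_Compl[OF closed_closure]]) (simp add: pdl_eq_0_outside_support)
qed

lemma Cc_inf_has_pdl_derivative:
  assumes "Cc_inf S \<phi>" "set vs \<subseteq> Basis" "v \<in> Basis"
  shows "((\<lambda>h. pdl vs \<phi> (w + h *\<^sub>R v)) has_real_derivative pdl (v # vs) \<phi> w) (at 0)"
proof (cases "w \<in> S")
  case True
  then show ?thesis using smooth_on_has_pdl_derivative assms by (auto simp: Cc_inf_def)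
next
  case False
  then have w: "w \<in> - closure {x. \<phi> x \<noteq> 0}" using assms(1) by (auto simp: Cc_inf_def)
  have "((\<lambda>h. pdl vs \<phi> (w + h *\<^sub>R v)) has_real_derivative 0) (at 0)"
    by (rule line_derivative_zero_on_open[OF open_Compl[OF closed_closure] w])
      (simp add: pdl_eq_0_outside_support)
  then show ?thesis using w pdl_eq_0_outside_support[of w \<phi> "v # vs"] by auto
qed

section \<open>Integrals of derivatives over boxes\<close>

definition cube :: "real^'n \<Rightarrow> real \<Rightarrow> (real^'n) set" where
  "cube z r = cbox (z - (\<chi> j. r)) (z + (\<chi> j. r))"

lemma ball_subset_cube_translate:
  fixes z c :: "real^'n"
  assumes "norm c < 1"
  shows "ball z R \<subseteq> cube (z + c) (R + 1)"
proof
  fix x assume "x \<in> ball z R"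
  then have "\<bar>x $ j - z $ j\<bar> < R" for j
    using component_le_norm_cart[of "x - z" j] by (simp add: dist_norm norm_minus_commute)
  moreover have "\<bar>c $ j\<bar> < 1" for j
    using component_le_norm_cart[of c j] assms by simp
  ultimately have "\<bar>x $ j - (z + c) $ j\<bar> \<le> R + 1" for j
    by (smt (verit) vector_add_component)
  then show "x \<in> cube (z + c) (R + 1)"
    unfolding cube_def mem_box_cart by (simp add: abs_le_iff algebra_simps)
qed

lemma ball_subset_cube: "ball z R \<subseteq> cube z (R + 1)"
  using ball_subset_cube_translate[of 0 z R] by simp

lemma integral_eq_integral_UNIV:
  fixes g :: "'a::euclidean_space \<Rightarrow> 'b::banach"
  assumes "\<And>x. x \<notin> A \<Longrightarrow> g x = 0" "A \<subseteq> T"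
  shows "integral T g = integral UNIV g"
proof -
  have "(\<lambda>x. if x \<in> T then g x else 0) = g" using assms by (intro ext) auto
  then show ?thesis using integral_restrict_UNIV[of T g] by simp
qed

text \<open>The margin \<open>1\<close> around the ball leaves room for shifts of norm less than \<open>1\<close>.\<close>

lemma integral_cube_translate:
  fixes g :: "real^'n \<Rightarrow> real"
  assumes cont: "continuous_on UNIV g" and supp: "\<And>x. x \<notin> ball z R \<Longrightarrow> g x = 0"
    and c: "norm c < 1"
  shows "integral (cube z (R + 1)) (\<lambda>x. g (x + c)) = integral (cube z (R + 1)) g"
proof -
  have "g integrable_on cube (z + c) (R + 1)"
    unfolding cube_def using cont by (blast intro: integrable_continuous continuous_on_subset)
  then have "((g \<circ> (+) c) has_integral integral (cube (z + c) (R + 1)) g) (cube z (R + 1))"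
    using has_integral_shift_cbox_iff by (fastforce simp: cube_def algebra_simps)
  then have "integral (cube z (R + 1)) (\<lambda>x. g (x + c)) = integral (cube (z + c) (R + 1)) g"
    by (simp add: integral_unique o_def add.commute)
  also have "\<dots> = integral UNIV g"
    by (rule integral_eq_integral_UNIV[OF supp ball_subset_cube_translate[OF c]])
  also have "\<dots> = integral (cube z (R + 1)) g"
    by (rule integral_eq_integral_UNIV[OF supp ball_subset_cube, symmetric])
  finally show ?thesis .
qed

text \<open>Shifting in direction \<open>e\<^sub>i\<close> does not change \<open>\<integral> g\<close>; differentiating under the
  integral sign at shift \<open>0\<close> gives \<open>\<integral> g' = 0\<close>.\<close>

lemma integral_cube_partial_derivative_eq_0:
  fixes g g' :: "real^'n \<Rightarrow> real"
  assumes dg: "\<And>x. ((\<lambda>h. g (x + h *\<^sub>R axis i 1)) has_real_derivative g' x) (at 0)"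
    and cg: "continuous_on UNIV g" and cg': "continuous_on UNIV g'"
    and supp: "\<And>x. x \<notin> ball z R \<Longrightarrow> g x = 0"
  shows "integral (cube z (R + 1)) g' = 0"
proof -
  define e where "e = axis i (1::real)"
  define \<Phi> where "\<Phi> h = integral (cube z (R + 1)) (\<lambda>x. g (x + h *\<^sub>R e))" for h :: real
  have const: "\<Phi> h = \<Phi> 0" if "h \<in> ball 0 1" for h
    using integral_cube_translate[OF cg supp, where c="h *\<^sub>R e"] that by (simp add: \<Phi>_def e_def)
  have "(\<Phi> has_field_derivative integral (cube z (R + 1)) (\<lambda>x. g' (x + 0 *\<^sub>R e))) (at 0 within ball 0 1)"
    unfolding \<Phi>_def cube_def
  proof (rule leibniz_rule_field_derivative[where fx="\<lambda>h x. g' (x + h *\<^sub>R e)"])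
    fix h x
    have "((\<lambda>k. g ((x + h *\<^sub>R e) + k *\<^sub>R e)) has_real_derivative g' (x + h *\<^sub>R e)) (at 0)"
      using dg by (simp add: e_def)
    then have "((\<lambda>h. g (x + h *\<^sub>R e)) has_real_derivative g' (x + h *\<^sub>R e)) (at h)"
      by (rule DERIV_along_line) (simp add: scaleR_add_left algebra_simps)
    then show "((\<lambda>h. g (x + h *\<^sub>R e)) has_field_derivative g' (x + h *\<^sub>R e)) (at h within ball 0 1)"
      by (rule has_field_derivative_at_within)
  next
    show "(\<lambda>x. g (x + h *\<^sub>R e)) integrable_on cbox (z - (\<chi> j. R + 1)) (z + (\<chi> j. R + 1))" for h
      by (rule integrable_continuous) (intro continuous_on_compose2[OF cg] continuous_intros; auto)
  next
    have "continuous_on UNIV (\<lambda>w::real \<times> (real^'n). g' (snd w + fst w *\<^sub>R e))"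
      by (rule continuous_on_compose2[OF cg']) (auto intro!: continuous_intros)
    then show "continuous_on (ball 0 1 \<times> cbox (z - (\<chi> j. R + 1)) (z + (\<chi> j. R + 1)))
        (\<lambda>(h, x). g' (x + h *\<^sub>R e))"
      unfolding split_beta by (rule continuous_on_subset) auto
  qed (simp_all add: convex_ball)
  then have "(\<Phi> has_field_derivative integral (cube z (R + 1)) g') (at 0)"
    using at_within_open[of 0 "ball (0::real) 1"] by simp
  then have "((\<lambda>_. \<Phi> 0) has_field_derivative integral (cube z (R + 1)) g') (at 0)"
    by (rule has_field_derivative_transform_within_open[of _ _ _ "ball 0 1"]) (auto intro: const)
  then show ?thesis by (rule DERIV_unique[OF _ DERIV_const])
qed

lemma integral_cube_space_derivative_eq_0:
  fixes G G' :: "(real^'n) \<times> real \<Rightarrow> real"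
  assumes dG: "\<And>w. snd w \<in> {a..s} \<Longrightarrow> ((\<lambda>h. G (w + h *\<^sub>R sdir i)) has_real_derivative G' w) (at 0)"
    and cG: "\<And>w. snd w \<in> {a..s} \<Longrightarrow> isCont G w"
    and cG': "\<And>w. snd w \<in> {a..s} \<Longrightarrow> isCont G' w"
    and supp: "\<And>w. fst w \<notin> ball z R \<Longrightarrow> G w = 0"
  shows "integral (cube z (R + 1) \<times> {a..s}) G' = 0"
proof -
  define lo where "lo = z - (\<chi> j. R + 1)"
  define hi where "hi = z + (\<chi> j. R + 1)"
  have box: "cube z (R + 1) \<times> {a..s} = cbox (lo, a) (hi, s)"
    by (simp add: cube_def lo_def hi_def cbox_Pair_eq)
  have cont: "continuous_on (cbox (lo, a) (hi, s)) G'"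
    by (intro continuous_at_imp_continuous_on ballI cG') (auto simp: cbox_Pair_iff)
  have slice: "integral (cbox lo hi) (\<lambda>x. G' (x, t)) = 0" if t: "t \<in> {a..s}" for t
    unfolding lo_def hi_def
  proof (rule integral_cube_partial_derivative_eq_0[where g="\<lambda>x. G (x, t)" and i=i, unfolded cube_def])
    show "((\<lambda>h. G (x + h *\<^sub>R axis i 1, t)) has_real_derivative G' (x, t)) (at 0)" for x
      using dG[of "(x, t)"] t by (simp add: sdir_def)
    show "continuous_on UNIV (\<lambda>x. G (x, t))"
      by (intro continuous_at_imp_continuous_on ballI continuous_intros
          continuous_at_compose[where f="\<lambda>x. (x, t)" and g=G, unfolded o_def] cG) (use t in auto)
    show "continuous_on UNIV (\<lambda>x. G' (x, t))"
      by (intro continuous_at_imp_continuous_on ballI continuous_intros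
          continuous_at_compose[where f="\<lambda>x. (x, t)" and g=G', unfolded o_def] cG') (use t in auto)
    show "G (x, t) = 0" if "x \<notin> ball z R" for x
      using supp[of "(x, t)"] that by simp
  qed
  have "integral (cbox (lo, a) (hi, s)) G' = integral (cbox lo hi) (\<lambda>x. integral (cbox a s) (\<lambda>t. G' (x, t)))"
    by (rule integral_prod_continuous[OF cont])
  also have "\<dots> = integral (cbox a s) (\<lambda>t. integral (cbox lo hi) (\<lambda>x. G' (x, t)))"
    by (rule integral_swap_continuous[where f="\<lambda>x t. G' (x, t)"]) (use cont in simp)
  also have "\<dots> = integral (cbox a s) (\<lambda>t. 0)"
    by (rule integral_cong) (use slice in simp)
  finally show ?thesis unfolding box by simp
qed

lemma integral_time_derivative_nonneg:
  fixes H H' :: "('a::euclidean_space) \<times> real \<Rightarrow> real"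
  assumes "a \<le> s"
    and dH: "\<And>w. snd w \<in> {a..s} \<Longrightarrow> ((\<lambda>h. H (w + h *\<^sub>R (0, 1))) has_real_derivative H' w) (at 0)"
    and cH': "\<And>w. snd w \<in> {a..s} \<Longrightarrow> isCont H' w"
    and incr: "\<And>x. H (x, a) \<le> H (x, s)"
  shows "integral (cbox lo hi \<times> {a..s}) H' \<ge> 0"
proof -
  have box: "cbox lo hi \<times> {a..s} = cbox (lo, a) (hi, s)"
    by (simp add: cbox_Pair_eq)
  have cont: "continuous_on (cbox (lo, a) (hi, s)) H'"
    by (intro continuous_at_imp_continuous_on ballI cH') (auto simp: cbox_Pair_iff)
  have ftc: "integral (cbox a s) (\<lambda>t. H' (x, t)) = H (x, s) - H (x, a)" for x
  proof -
    have "((\<lambda>t. H' (x, t)) has_integral H (x, s) - H (x, a)) {a..s}"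
    proof (rule fundamental_theorem_of_calculus[OF assms(1)])
      fix t assume "t \<in> {a..s}"
      then have "((\<lambda>t. H (x, t)) has_real_derivative H' (x, t)) (at t)"
        using dH[of "(x, t)"] by (intro DERIV_along_line[of H _ t "(0, 1)"]) auto
      then show "((\<lambda>t. H (x, t)) has_vector_derivative H' (x, t)) (at t within {a..s})"
        by (simp add: has_real_derivative_iff_has_vector_derivative[symmetric] has_field_derivative_at_within)
    qed
    then show ?thesis by (simp add: integral_unique)
  qed
  have "integral (cbox (lo, a) (hi, s)) H' = integral (cbox lo hi) (\<lambda>x. H (x, s) - H (x, a))"
    unfolding integral_prod_continuous[OF cont] ftc ..
  also have "\<dots> \<ge> 0"
    using incr by (cases "(\<lambda>x. H (x, s) - H (x, a)) integrable_on cbox lo hi")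
      (auto intro: integral_nonneg simp: not_integrable_integral)
  finally show ?thesis unfolding box .
qed

lemma integral_cylinder_eq_integral_cube:
  fixes F :: "(real^'n) \<times> real \<Rightarrow> real"
  assumes supp: "\<And>w. F w \<noteq> 0 \<Longrightarrow> fst w \<in> ball z R \<and> a < snd w"
  shows "integral (ball z R \<times> {a<..<s}) F = integral (cube z (R + 1) \<times> {a..s}) F"
proof -
  have "negligible {w::(real^'n) \<times> real. w \<bullet> (0, 1) = s}"
    by (rule negligible_standard_hyperplane) (simp add: Basis_prod_def)
  then have "integral UNIV (\<lambda>w. if w \<in> cube z (R + 1) \<times> {a..s} then F w else 0)
      = integral UNIV (\<lambda>w. if w \<in> ball z R \<times> {a<..<s} then F w else 0)"
  proof (rule integral_spike)
    fix w :: "(real^'n) \<times> real"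
    assume "w \<in> UNIV - {w. w \<bullet> (0, 1) = s}"
    then have "snd w \<noteq> s" by (cases w) simp
    then show "(if w \<in> ball z R \<times> {a<..<s} then F w else 0)
        = (if w \<in> cube z (R + 1) \<times> {a..s} then F w else 0)"
      using supp[of w] ball_subset_cube[of z R] by (cases w) auto
  qed
  then show ?thesis unfolding integral_restrict_UNIV ..
qed

section \<open>Pointwise bounds from the equation\<close>

lemma norm_power2_cart:
  fixes x :: "real^'n"
  shows "(norm x)\<^sup>2 = (\<Sum>i\<in>UNIV. (x$i)\<^sup>2)"
  unfolding power2_norm_eq_inner inner_vec_def by (simp add: power2_eq_square)

lemma norm_power2_rows:
  fixes X :: "real^'n^'m"
  shows "(norm X)\<^sup>2 = (\<Sum>i\<in>UNIV. (norm (X$i))\<^sup>2)"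
  by (simp add: power2_norm_eq_inner inner_vec_def)

lemma norm_matrix_vector_mult_le:
  fixes X :: "real^'n^'m" and q :: "real^'n"
  shows "norm (X *v q) \<le> norm X * norm q"
proof -
  have row: "((X *v q)$i)\<^sup>2 \<le> (norm (X$i))\<^sup>2 * (norm q)\<^sup>2" for i
  proof -
    have "\<bar>(X *v q)$i\<bar> \<le> norm (X$i) * norm q"
      using Cauchy_Schwarz_ineq2[of "X$i" q]
      by (simp add: matrix_vector_mult_def inner_vec_def mult.commute)
    then show ?thesis
      by (metis abs_ge_zero power2_abs power_mono power_mult_distrib)
  qed
  have "(norm (X *v q))\<^sup>2 = (\<Sum>i\<in>UNIV. ((X *v q)$i)\<^sup>2)"
    by (rule norm_power2_cart)
  also have "\<dots> \<le> (\<Sum>i\<in>UNIV. (norm (X$i))\<^sup>2 * (norm q)\<^sup>2)"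
    by (rule sum_mono) (rule row)
  also have "\<dots> = (norm X * norm q)\<^sup>2"
    by (simp add: norm_power2_rows power_mult_distrib sum_distrib_right)
  finally show ?thesis by (rule power2_le_imp_le) simp
qed

lemma abs_trace_le:
  fixes X :: "real^'n^'n"
  shows "\<bar>trace X\<bar> \<le> real CARD('n) * norm X"
proof -
  have "\<bar>X$i$i\<bar> \<le> norm X" for i
  proof -
    have "(norm (X$i))\<^sup>2 \<le> (norm X)\<^sup>2"
      unfolding norm_power2_rows[of X] by (rule member_le_sum) auto
    then have "norm (X$i) \<le> norm X" by (rule power2_le_imp_le) simp
    then show ?thesis using component_le_norm_cart[of "X$i" i] by linarith
  qed
  then have "(\<Sum>i\<in>UNIV. \<bar>X$i$i\<bar>) \<le> real CARD('n) * norm X"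
    using sum_bounded_above[of UNIV "\<lambda>i. \<bar>X$i$i\<bar>" "norm X"] by simp
  then show ?thesis
    unfolding trace_def using sum_abs[of "\<lambda>i. X$i$i" UNIV] by linarith
qed

lemma regularized_equation_abs_le:
  fixes X :: "real^'n^'n" and q :: "real^'n"
  assumes eq: "ut - trace X - (p - 2) * ((X *v q) \<bullet> q) / ((norm q)\<^sup>2 + eps) = 0"
    and eps: "eps > 0"
  shows "\<bar>ut\<bar> \<le> (real CARD('n) + \<bar>p - 2\<bar>) * norm X"
proof -
  have d: "(norm q)\<^sup>2 + eps > 0" using eps by (simp add: add_nonneg_pos)
  have "\<bar>(X *v q) \<bullet> q\<bar> \<le> norm X * norm q * norm q"
    using Cauchy_Schwarz_ineq2[of "X *v q" q] mult_right_mono[OF norm_matrix_vector_mult_le norm_ge_zero]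
    by (meson order_trans)
  also have "\<dots> \<le> norm X * ((norm q)\<^sup>2 + eps)"
    using eps by (simp add: power2_eq_square mult.assoc mult_left_mono)
  finally have quot: "\<bar>(X *v q) \<bullet> q / ((norm q)\<^sup>2 + eps)\<bar> \<le> norm X"
    using d by (simp add: divide_le_eq)
  have "ut = trace X + (p - 2) * ((X *v q) \<bullet> q / ((norm q)\<^sup>2 + eps))"
    using eq by simp
  then have "\<bar>ut\<bar> \<le> \<bar>trace X\<bar> + \<bar>p - 2\<bar> * \<bar>(X *v q) \<bullet> q / ((norm q)\<^sup>2 + eps)\<bar>"
    by (metis abs_mult abs_triangle_ineq)
  also have "\<dots> \<le> real CARD('n) * norm X + \<bar>p - 2\<bar> * norm X"
    by (intro add_mono abs_trace_le mult_left_mono quot) simp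
  finally show ?thesis by (simp add: algebra_simps)
qed

text \<open>A smooth viscosity solution is a classical one: it touches itself from above and below.\<close>

lemma visc_sol_classical:
  assumes "visc_sol p eps S u" "open S" "eps > 0" "Ck_on 2 S u" "w \<in> S"
  shows "Dt u w - Lap u w - (p - 2) * ((D2x u w *v Dx u w) \<bullet> Dx u w) / ((norm (Dx u w))\<^sup>2 + eps) = 0"
proof -
  let ?A = "Dt u w - Lap u w - (p - 2) * ((D2x u w *v Dx u w) \<bullet> Dx u w) / ((norm (Dx u w))\<^sup>2 + eps)"
  have "?A \<ge> 0"
    using assms unfolding visc_sol_def visc_super_def by (metis order_refl subset_refl)
  moreover have "?A \<le> 0"
    using assms unfolding visc_sol_def visc_sub_def by (metis order_refl subset_refl)
  ultimately show ?thesis by simp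
qed

lemma visc_sol_abs_Dt_le:
  fixes u :: "(real^'n) \<times> real \<Rightarrow> real"
  assumes "visc_sol p eps S u" "open S" "eps > 0" "Ck_on 2 S u" "w \<in> S"
  shows "\<bar>Dt u w\<bar> \<le> (real CARD('n) + \<bar>p - 2\<bar>) * norm (D2x u w)"
  using regularized_equation_abs_le visc_sol_classical[OF assms] assms(3)
  unfolding Lap_def by blast

lemma mult_le_of_abs_bounds:
  fixes L ut f N A K \<eta> :: real
  assumes "\<bar>L\<bar> \<le> A * N" "\<bar>ut\<bar> \<le> K * N" "A * K \<le> \<eta>"
  shows "L * ut * f\<^sup>2 \<le> \<eta> * (N\<^sup>2 * f\<^sup>2)"
proof -
  have "L * ut * f\<^sup>2 \<le> \<bar>L\<bar> * \<bar>ut\<bar> * f\<^sup>2"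
    by (simp add: abs_mult[symmetric] mult_right_mono)
  also have "\<dots> \<le> (A * N) * (K * N) * f\<^sup>2"
    using assms(1,2) by (intro mult_right_mono mult_mono) auto
  also have "\<dots> = (A * K) * (N\<^sup>2 * f\<^sup>2)" by (simp add: power2_eq_square algebra_simps)
  also have "\<dots> \<le> \<eta> * (N\<^sup>2 * f\<^sup>2)" using assms(3) by (intro mult_right_mono) auto
  finally show ?thesis .
qed

lemma young_energy_bound:
  fixes a b :: "real^'n" and ut f ft N K M \<eta> :: real
  assumes ut: "\<bar>ut\<bar> \<le> K * N" and K: "K > 0" and \<eta>: "0 < \<eta>" "\<eta> \<le> M"
  shows "(norm a)\<^sup>2 * (f * ft) - 2 * (a \<bullet> b) * ut * f
     \<le> \<eta> * (N\<^sup>2 * f\<^sup>2) + (M + K\<^sup>2) / \<eta> * ((norm a)\<^sup>2 * ((norm b)\<^sup>2 + \<bar>f * ft\<bar>))"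
proof -
  define x where "x = \<bar>ut * f\<bar>"
  define y where "y = norm a * norm b"
  define e where "e = \<eta> / K\<^sup>2"
  have e: "e > 0" using \<eta> K by (simp add: e_def)
  have "(norm a)\<^sup>2 * (f * ft) \<le> (norm a)\<^sup>2 * \<bar>f * ft\<bar>"
    by (simp add: mult_left_mono)
  also have "\<dots> \<le> M / \<eta> * ((norm a)\<^sup>2 * \<bar>f * ft\<bar>)"
    using \<eta> mult_right_mono[of 1 "M / \<eta>" "(norm a)\<^sup>2 * \<bar>f * ft\<bar>"] by simp
  finally have t1: "(norm a)\<^sup>2 * (f * ft) \<le> M / \<eta> * ((norm a)\<^sup>2 * \<bar>f * ft\<bar>)" .
  have "- (2 * (a \<bullet> b) * ut * f) \<le> 2 * \<bar>a \<bullet> b\<bar> * x"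
    using abs_ge_minus_self[of "2 * (a \<bullet> b) * ut * f"] by (simp add: x_def abs_mult mult.assoc)
  also have "\<dots> \<le> 2 * y * x"
    using Cauchy_Schwarz_ineq2[of a b] by (simp add: x_def y_def mult_right_mono)
  also have "2 * y * x \<le> e * x\<^sup>2 + y\<^sup>2 / e"
    using sum_squares_bound[of "e * x" y] e by (simp add: field_simps power2_eq_square)
  also have "e * x\<^sup>2 \<le> \<eta> * (N\<^sup>2 * f\<^sup>2)"
  proof -
    have "x \<le> K * N * \<bar>f\<bar>"
      using mult_right_mono[OF ut abs_ge_zero[of f]] by (simp add: x_def abs_mult)
    then have "x\<^sup>2 \<le> (K * N * \<bar>f\<bar>)\<^sup>2"
      by (rule power_mono) (simp add: x_def)
    then have "x\<^sup>2 \<le> K\<^sup>2 * (N\<^sup>2 * f\<^sup>2)"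
      by (simp add: power_mult_distrib mult.assoc)
    then show ?thesis using e K by (simp add: e_def field_simps)
  qed
  also have "y\<^sup>2 / e = K\<^sup>2 / \<eta> * ((norm a)\<^sup>2 * (norm b)\<^sup>2)"
    using K \<eta> by (simp add: y_def e_def power_mult_distrib)
  finally have t2: "- (2 * (a \<bullet> b) * ut * f) \<le> \<eta> * (N\<^sup>2 * f\<^sup>2) + K\<^sup>2 / \<eta> * ((norm a)\<^sup>2 * (norm b)\<^sup>2)"
    by linarith
  have "M / \<eta> * ((norm a)\<^sup>2 * \<bar>f * ft\<bar>) + K\<^sup>2 / \<eta> * ((norm a)\<^sup>2 * (norm b)\<^sup>2)
      \<le> (M + K\<^sup>2) / \<eta> * ((norm a)\<^sup>2 * ((norm b)\<^sup>2 + \<bar>f * ft\<bar>))"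
    using \<eta> by (simp add: field_simps mult_left_mono)
  then show ?thesis using t1 t2 by linarith
qed

section \<open>Integration by parts on a cylinder\<close>

abbreviation tdir :: "(real^'n::finite) \<times> real" where
  "tdir \<equiv> (0, 1)"

lemma sdir_in_Basis [simp]: "sdir i \<in> Basis"
  by (simp add: sdir_def Basis_prod_def axis_in_Basis_iff image_iff)

lemma tdir_in_Basis [simp]: "tdir \<in> Basis"
  by (simp add: Basis_prod_def)

lemma isCont_Dx:
  assumes "\<And>i. isCont (pdl [sdir i] f) w"
  shows "isCont (Dx f) w"
  unfolding Dx_def[abs_def] isCont_def by (intro tendsto_vec_lambda) (use assms in \<open>simp add: isCont_def\<close>)

lemma isCont_D2x:
  assumes "\<And>i j. isCont (pdl [sdir i, sdir j] f) w"
  shows "isCont (D2x f) w"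
  unfolding D2x_def[abs_def] isCont_def by (intro tendsto_vec_lambda) (use assms in \<open>simp add: isCont_def\<close>)

lemma Lap_eq_sum: "Lap f w = (\<Sum>i\<in>UNIV. pdl [sdir i, sdir i] f w)"
  by (simp add: Lap_def trace_def D2x_def)

text \<open>
  \<open>Om\<close> plays the role of \<open>U\<^sub>T\<close> and \<open>cylinder\<close> that of \<open>Q\<^sub>2\<^sub>r\<close>, with \<open>R = 2r\<close>,
  \<open>a = s - 4r\<^sup>2\<close> and \<open>s' = s + 4r\<^sup>2\<close>. The cut-off \<open>\<phi>\<close> vanishes near the bottom
  \<open>t = a\<close> of the cylinder but not necessarily near its top \<open>t = s\<close>.
\<close>

locale cutoff_cylinder =
  fixes Om :: "((real^'n::finite) \<times> real) set"
    and u \<phi> :: "(real^'n) \<times> real \<Rightarrow> real"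
    and z :: "real^'n" and R a s s' :: real
  assumes open_Om: "open Om"
    and smooth_u: "smooth_on Om u"
    and a_less_s: "a < s"
    and cylinder_in_Om: "compactly_contained (ball z R \<times> {a<..<s}) Om"
    and cutoff: "Cc_inf (ball z R \<times> {a<..<s'}) \<phi>"
begin

abbreviation cylinder where "cylinder \<equiv> ball z R \<times> {a<..<s}"

definition supp where "supp = closure {w. \<phi> w \<noteq> 0}"

definition enclosing_box where "enclosing_box = cube z (R + 1) \<times> {a..s}"

lemma supp_subset: "w \<in> supp \<Longrightarrow> fst w \<in> ball z R \<and> a < snd w"
  using cutoff by (auto simp: Cc_inf_def supp_def mem_Times_iff)

lemma pdl_phi_eq_0: "w \<notin> supp \<Longrightarrow> pdl vs \<phi> w = 0"
  unfolding supp_def by (rule pdl_eq_0_outside_support)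

lemma phi_eq_0: "w \<notin> supp \<Longrightarrow> \<phi> w = 0"
  using pdl_phi_eq_0[of w "[]"] by simp

lemma isCont_phi: "set vs \<subseteq> Basis \<Longrightarrow> isCont (pdl vs \<phi>) w"
  using Cc_inf_isCont_pdl[OF cutoff] by (simp add: open_Times)

lemma isCont_phi0: "isCont \<phi> w"
  using isCont_phi[of "[]"] by simp

lemma phi_derivative:
  "set vs \<subseteq> Basis \<Longrightarrow> v \<in> Basis \<Longrightarrow>
    ((\<lambda>h. pdl vs \<phi> (w + h *\<^sub>R v)) has_real_derivative pdl (v # vs) \<phi> w) (at 0)"
  by (rule Cc_inf_has_pdl_derivative[OF cutoff])

lemma isCont_u: "set vs \<subseteq> Basis \<Longrightarrow> w \<in> Om \<Longrightarrow> isCont (pdl vs u) w"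
  by (rule smooth_on_isCont_pdl[OF smooth_u open_Om])

lemma u_derivative:
  "set vs \<subseteq> Basis \<Longrightarrow> v \<in> Basis \<Longrightarrow> w \<in> Om \<Longrightarrow>
    ((\<lambda>h. pdl vs u (w + h *\<^sub>R v)) has_real_derivative pdl (v # vs) u w) (at 0)"
  by (rule smooth_on_has_pdl_derivative[OF smooth_u])

lemma u_time_space_commute:
  assumes "w \<in> Om"
  shows "pdl [sdir i, tdir] u w = pdl [tdir, sdir i] u w"
proof (rule partial_derivatives_commute[OF open_Om assms])
  fix y assume y: "y \<in> Om"
  show "((\<lambda>k. u (y + k *\<^sub>R tdir)) has_real_derivative pdl [tdir] u y) (at 0)"
    using u_derivative[of "[]" tdir y] y by simp
  show "((\<lambda>k. u (y + k *\<^sub>R sdir i)) has_real_derivative pdl [sdir i] u y) (at 0)"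
    using u_derivative[of "[]" "sdir i" y] y by simp
  show "((\<lambda>k. pdl [tdir] u (y + k *\<^sub>R sdir i)) has_real_derivative pdl [sdir i, tdir] u y) (at 0)"
    using u_derivative[of "[tdir]" "sdir i" y] y by simp
  show "((\<lambda>k. pdl [sdir i] u (y + k *\<^sub>R tdir)) has_real_derivative pdl [tdir, sdir i] u y) (at 0)"
    using u_derivative[of "[sdir i]" tdir y] y by simp
qed (use isCont_u[of "[sdir i, tdir]"] isCont_u[of "[tdir, sdir i]"] assms in simp_all)

lemma in_Om_or_notin_supp:
  assumes "snd w \<in> {a..s}"
  shows "w \<in> Om \<or> w \<notin> supp"
proof (rule disjCI)
  assume "\<not> w \<notin> supp"
  then have "w \<in> ball z R \<times> {a..s}"
    using supp_subset assms by (cases w) auto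
  also have "\<dots> \<subseteq> closure cylinder"
    using a_less_s closure_subset[of "ball z R"] by (auto simp: closure_Times)
  also have "\<dots> \<subseteq> Om"
    using cylinder_in_Om by (simp add: compactly_contained_def)
  finally show "w \<in> Om" .
qed

lemma isCont_on_slab:
  fixes F :: "(real^'n) \<times> real \<Rightarrow> real"
  assumes "\<And>w. w \<in> Om \<Longrightarrow> isCont F w" "\<And>w. w \<notin> supp \<Longrightarrow> F w = 0" "snd w \<in> {a..s}"
  shows "isCont F w"
  using in_Om_or_notin_supp[OF assms(3)]
proof
  assume "w \<notin> supp"
  then show ?thesis
    by (intro isCont_zero_on_open[of "- supp"]) (use assms(2) in \<open>auto simp: supp_def\<close>)
qed (rule assms(1))

lemma line_derivative_on_slab:
  fixes F F' :: "(real^'n) \<times> real \<Rightarrow> real"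
  assumes "\<And>w. w \<in> Om \<Longrightarrow> ((\<lambda>h. F (w + h *\<^sub>R v)) has_real_derivative F' w) (at 0)"
    and "\<And>w. w \<notin> supp \<Longrightarrow> F w = 0" "\<And>w. w \<notin> supp \<Longrightarrow> F' w = 0" "snd w \<in> {a..s}"
  shows "((\<lambda>h. F (w + h *\<^sub>R v)) has_real_derivative F' w) (at 0)"
  using in_Om_or_notin_supp[OF assms(4)]
proof
  assume "w \<notin> supp"
  then show ?thesis
    using line_derivative_zero_on_open[of "- supp" w F v] assms(2,3) by (auto simp: supp_def)
qed (rule assms(1))

lemma integrable_on_enclosing_box:
  fixes F :: "(real^'n) \<times> real \<Rightarrow> real"
  assumes "\<And>w. w \<in> Om \<Longrightarrow> isCont F w" "\<And>w. w \<notin> supp \<Longrightarrow> F w = 0"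
  shows "F integrable_on enclosing_box"
proof -
  have "continuous_on enclosing_box F"
    by (intro continuous_at_imp_continuous_on ballI isCont_on_slab[OF assms])
      (auto simp: enclosing_box_def)
  moreover have "enclosing_box = cbox (z - (\<chi> j. R + 1), a) (z + (\<chi> j. R + 1), s)"
    by (simp add: enclosing_box_def cube_def cbox_Pair_eq)
  ultimately show ?thesis by (simp add: integrable_continuous)
qed

lemma integral_cylinder_eq_enclosing_box:
  fixes F :: "(real^'n) \<times> real \<Rightarrow> real"
  assumes "\<And>w. w \<notin> supp \<Longrightarrow> F w = 0"
  shows "integral cylinder F = integral enclosing_box F"
  using integral_cylinder_eq_integral_cube[of F z R a s] assms supp_subset
  by (auto simp: enclosing_box_def)

lemma integral_flux_derivative_eq_0:
  "integral enclosing_box (\<lambda>w. pdl [sdir i, sdir i] u w * pdl [tdir] u w * (\<phi> w)\<^sup>2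
      + (pdl [sdir i] u w - c$i) * pdl [sdir i, tdir] u w * (\<phi> w)\<^sup>2
      + (pdl [sdir i] u w - c$i) * pdl [tdir] u w * (2 * \<phi> w * pdl [sdir i] \<phi> w)) = 0"
  (is "integral enclosing_box ?G' = 0")
proof -
  define G where "G w = (pdl [sdir i] u w - c$i) * pdl [tdir] u w * (\<phi> w)\<^sup>2" for w
  have vanish: "G w = 0" "?G' w = 0" if "w \<notin> supp" for w
    using phi_eq_0[OF that] by (simp_all add: G_def)
  have deriv: "((\<lambda>h. G (w + h *\<^sub>R sdir i)) has_real_derivative ?G' w) (at 0)" if "w \<in> Om" for w
  proof -
    have d1: "((\<lambda>h. pdl [sdir i] u (w + h *\<^sub>R sdir i)) has_real_derivative pdl [sdir i, sdir i] u w) (at 0)"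
      and d2: "((\<lambda>h. pdl [tdir] u (w + h *\<^sub>R sdir i)) has_real_derivative pdl [sdir i, tdir] u w) (at 0)"
      using u_derivative[of "[sdir i]" "sdir i" w] u_derivative[of "[tdir]" "sdir i" w] that
      by simp_all
    have d3: "((\<lambda>h. \<phi> (w + h *\<^sub>R sdir i)) has_real_derivative pdl [sdir i] \<phi> w) (at 0)"
      using phi_derivative[of "[]" "sdir i" w] by simp
    show ?thesis
      unfolding G_def by (rule derivative_eq_intros d1 d2 d3 refl)+ (simp add: algebra_simps)
  qed
  have cont_G: "isCont G w" if "w \<in> Om" for w
    unfolding G_def by (insert that, intro continuous_intros isCont_u isCont_phi isCont_phi0) simp_all
  have cont_G': "isCont ?G' w" if "w \<in> Om" for w
    by (insert that, intro continuous_intros isCont_u isCont_phi isCont_phi0) simp_all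
  show ?thesis
    unfolding enclosing_box_def
  proof (rule integral_cube_space_derivative_eq_0[where G=G])
    fix w :: "(real^'n) \<times> real" assume w: "snd w \<in> {a..s}"
    show "((\<lambda>h. G (w + h *\<^sub>R sdir i)) has_real_derivative ?G' w) (at 0)"
      by (rule line_derivative_on_slab[OF deriv vanish w])
    show "isCont G w"
      by (rule isCont_on_slab[OF cont_G vanish(1) w])
    show "isCont ?G' w"
      by (rule isCont_on_slab[OF cont_G' vanish(2) w])
  next
    fix w :: "(real^'n) \<times> real" assume "fst w \<notin> ball z R"
    then show "G w = 0" using supp_subset vanish by blast
  qed
qed

lemma integral_energy_derivative_nonneg:
  "integral enclosing_box (\<lambda>w. 2 * (pdl [sdir i] u w - c$i) * pdl [tdir, sdir i] u w * (\<phi> w)\<^sup>2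
      + (pdl [sdir i] u w - c$i)\<^sup>2 * (2 * \<phi> w * pdl [tdir] \<phi> w)) \<ge> 0"
  (is "integral enclosing_box ?H' \<ge> 0")
proof -
  define H where "H w = (pdl [sdir i] u w - c$i)\<^sup>2 * (\<phi> w)\<^sup>2" for w
  have vanish: "H w = 0" "?H' w = 0" if "w \<notin> supp" for w
    using phi_eq_0[OF that] by (simp_all add: H_def)
  have deriv: "((\<lambda>h. H (w + h *\<^sub>R tdir)) has_real_derivative ?H' w) (at 0)" if "w \<in> Om" for w
  proof -
    have d1: "((\<lambda>h. pdl [sdir i] u (w + h *\<^sub>R tdir)) has_real_derivative pdl [tdir, sdir i] u w) (at 0)"
      using u_derivative[of "[sdir i]" tdir w] that by simp
    have d2: "((\<lambda>h. \<phi> (w + h *\<^sub>R tdir)) has_real_derivative pdl [tdir] \<phi> w) (at 0)"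
      using phi_derivative[of "[]" tdir w] by simp
    show ?thesis
      unfolding H_def
      by (rule derivative_eq_intros d1 d2 refl)+ (simp add: algebra_simps zero_prod_def[symmetric])
  qed
  have cont: "isCont ?H' w" if "w \<in> Om" for w
    by (insert that, intro continuous_intros isCont_u isCont_phi isCont_phi0) simp_all
  show ?thesis
    unfolding enclosing_box_def cube_def
  proof (rule integral_time_derivative_nonneg[where H=H])
    fix w :: "(real^'n) \<times> real" assume w: "snd w \<in> {a..s}"
    show "((\<lambda>h. H (w + h *\<^sub>R tdir)) has_real_derivative ?H' w) (at 0)"
      by (rule line_derivative_on_slab[OF deriv vanish w])
    show "isCont ?H' w"
      by (rule isCont_on_slab[OF cont vanish(2) w])
  next
    fix x
    have "(x, a) \<notin> supp" using supp_subset by fastforce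
    then show "H (x, a) \<le> H (x, s)" by (simp add: vanish(1)) (simp add: H_def)
  qed (use a_less_s in simp)
qed

lemma integral_second_derivative_le:
  "integral enclosing_box (\<lambda>w. pdl [sdir i, sdir i] u w * pdl [tdir] u w * (\<phi> w)\<^sup>2)
   \<le> integral enclosing_box (\<lambda>w. (pdl [sdir i] u w - c$i)\<^sup>2 * (\<phi> w * pdl [tdir] \<phi> w)
        - 2 * (pdl [sdir i] u w - c$i) * pdl [tdir] u w * \<phi> w * pdl [sdir i] \<phi> w)"
  (is "integral enclosing_box ?L \<le> integral enclosing_box ?R")
proof -
  let ?G' = "\<lambda>w. pdl [sdir i, sdir i] u w * pdl [tdir] u w * (\<phi> w)\<^sup>2
      + (pdl [sdir i] u w - c$i) * pdl [sdir i, tdir] u w * (\<phi> w)\<^sup>2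
      + (pdl [sdir i] u w - c$i) * pdl [tdir] u w * (2 * \<phi> w * pdl [sdir i] \<phi> w)"
  let ?H' = "\<lambda>w. 2 * (pdl [sdir i] u w - c$i) * pdl [tdir, sdir i] u w * (\<phi> w)\<^sup>2
      + (pdl [sdir i] u w - c$i)\<^sup>2 * (2 * \<phi> w * pdl [tdir] \<phi> w)"
  have integrable: "?G' integrable_on enclosing_box" "?H' integrable_on enclosing_box"
    "?R integrable_on enclosing_box"
    by (intro integrable_on_enclosing_box continuous_intros isCont_u isCont_phi isCont_phi0;
        simp add: phi_eq_0)+
  have pointwise: "?L w = ?G' w - ?H' w / 2 + ?R w" if "w \<in> enclosing_box" for w
  proof -
    have "snd w \<in> {a..s}" using that by (auto simp: enclosing_box_def)
    then consider "w \<in> Om" | "w \<notin> supp" using in_Om_or_notin_supp by blast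
    then show ?thesis
    proof cases
      case 1
      then have "pdl [sdir i, tdir] u w = pdl [tdir, sdir i] u w" by (rule u_time_space_commute)
      then show ?thesis by (simp add: field_simps power2_eq_square)
    qed (simp add: phi_eq_0)
  qed
  have "integral enclosing_box ?L = integral enclosing_box (\<lambda>w. ?G' w - ?H' w / 2 + ?R w)"
    by (rule integral_cong) (rule pointwise)
  also have "\<dots> = integral enclosing_box ?G' - integral enclosing_box ?H' / 2
      + integral enclosing_box ?R"
    by (rule integral_unique)
      (intro has_integral_add has_integral_diff has_integral_divide integrable_integral integrable)
  finally show ?thesis
    using integral_flux_derivative_eq_0[where i=i and c=c]
      integral_energy_derivative_nonneg[where i=i and c=c] by linarith
qed

lemma isCont_u_derivatives:
  assumes "w \<in> Om"
  shows "isCont (Dx u) w" "isCont (D2x u) w" "isCont (Dt u) w" "isCont (Lap u) w"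
proof -
  have Dt: "Dt u = pdl [tdir] u" and Lap: "Lap u = (\<lambda>w. \<Sum>i\<in>UNIV. pdl [sdir i, sdir i] u w)"
    by (simp_all add: fun_eq_iff Dt_def Lap_eq_sum)
  show "isCont (Dx u) w" "isCont (D2x u) w"
    by (intro isCont_Dx isCont_D2x isCont_u assms; simp)+
  show "isCont (Dt u) w" "isCont (Lap u) w"
    unfolding Dt Lap by (intro continuous_intros isCont_u assms; simp)+
qed

lemma isCont_phi_derivatives: "isCont (Dx \<phi>) w" "isCont (Dt \<phi>) w"
proof -
  show "isCont (Dx \<phi>) w" by (rule isCont_Dx) (rule isCont_phi; simp)
  show "isCont (Dt \<phi>) w" using isCont_phi[of "[tdir]" w] by (simp add: Dt_def[abs_def])
qed

lemma Dx_phi_eq_0: "w \<notin> supp \<Longrightarrow> Dx \<phi> w = 0"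
  by (simp add: Dx_def vec_eq_iff pdl_phi_eq_0 del: pdl.simps)

lemma integral_cylinder_le_combination:
  fixes f A B :: "(real^'n) \<times> real \<Rightarrow> real"
  assumes cont: "\<And>w. w \<in> Om \<Longrightarrow> isCont f w" "\<And>w. w \<in> Om \<Longrightarrow> isCont A w"
      "\<And>w. w \<in> Om \<Longrightarrow> isCont B w"
    and vanish: "\<And>w. w \<notin> supp \<Longrightarrow> f w = 0" "\<And>w. w \<notin> supp \<Longrightarrow> A w = 0"
      "\<And>w. w \<notin> supp \<Longrightarrow> B w = 0"
    and le: "\<And>w. w \<in> Om \<Longrightarrow> f w \<le> \<alpha> * A w + \<beta> * B w"
  shows "integral cylinder f \<le> \<alpha> * integral cylinder A + \<beta> * integral cylinder B"
proof -
  have integrable: "f integrable_on enclosing_box" "A integrable_on enclosing_box"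
    "B integrable_on enclosing_box"
    using integrable_on_enclosing_box[OF cont(1) vanish(1)]
      integrable_on_enclosing_box[OF cont(2) vanish(2)]
      integrable_on_enclosing_box[OF cont(3) vanish(3)] by simp_all
  have "integral cylinder f = integral enclosing_box f"
    by (rule integral_cylinder_eq_enclosing_box[OF vanish(1)])
  also have "\<dots> \<le> integral enclosing_box (\<lambda>w. \<alpha> * A w + \<beta> * B w)"
  proof (rule integral_le)
    fix w assume "w \<in> enclosing_box"
    then have "snd w \<in> {a..s}" by (auto simp: enclosing_box_def)
    then consider "w \<in> Om" | "w \<notin> supp" using in_Om_or_notin_supp by blast
    then show "f w \<le> \<alpha> * A w + \<beta> * B w"
      by cases (simp_all add: le vanish)
  qed (use integrable in \<open>auto intro!: integrable_add integrable_on_mult_right\<close>)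
  also have "\<dots> = \<alpha> * integral enclosing_box A + \<beta> * integral enclosing_box B"
    by (rule integral_unique)
      (intro has_integral_add has_integral_mult_right integrable_integral integrable)
  also have "\<dots> = \<alpha> * integral cylinder A + \<beta> * integral cylinder B"
    by (simp add: integral_cylinder_eq_enclosing_box[OF vanish(2)]
        integral_cylinder_eq_enclosing_box[OF vanish(3)])
  finally show ?thesis .
qed

lemma integral_Lap_Dt_le:
  "integral cylinder (\<lambda>w. Lap u w * Dt u w * (\<phi> w)\<^sup>2)
   \<le> integral cylinder (\<lambda>w. (norm (Dx u w - c))\<^sup>2 * (\<phi> w * Dt \<phi> w)
        - 2 * ((Dx u w - c) \<bullet> Dx \<phi> w) * Dt u w * \<phi> w)"
proof -
  let ?L = "\<lambda>i w. pdl [sdir i, sdir i] u w * pdl [tdir] u w * (\<phi> w)\<^sup>2"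
  let ?R = "\<lambda>i w. (pdl [sdir i] u w - c$i)\<^sup>2 * (\<phi> w * pdl [tdir] \<phi> w)
        - 2 * (pdl [sdir i] u w - c$i) * pdl [tdir] u w * \<phi> w * pdl [sdir i] \<phi> w"
  have L: "Lap u w * Dt u w * (\<phi> w)\<^sup>2 = (\<Sum>i\<in>UNIV. ?L i w)" for w
    by (simp add: Lap_eq_sum Dt_def sum_distrib_right)
  have R: "(norm (Dx u w - c))\<^sup>2 * (\<phi> w * Dt \<phi> w) - 2 * ((Dx u w - c) \<bullet> Dx \<phi> w) * Dt u w * \<phi> w
      = (\<Sum>i\<in>UNIV. ?R i w)" for w
    by (simp add: norm_power2_cart Dx_def Dt_def inner_vec_def sum_subtractf
        sum_distrib_left sum_distrib_right sum.distrib algebra_simps)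
  have integrable: "?L i integrable_on enclosing_box" "?R i integrable_on enclosing_box" for i
    by (intro integrable_on_enclosing_box continuous_intros isCont_u isCont_phi isCont_phi0;
        simp add: phi_eq_0)+
  have "integral cylinder (\<lambda>w. Lap u w * Dt u w * (\<phi> w)\<^sup>2)
      = integral enclosing_box (\<lambda>w. \<Sum>i\<in>UNIV. ?L i w)"
    unfolding L by (rule integral_cylinder_eq_enclosing_box) (simp add: phi_eq_0)
  also have "\<dots> = (\<Sum>i\<in>UNIV. integral enclosing_box (?L i))"
    by (rule integral_sum) (simp_all only: finite integrable)
  also have "\<dots> \<le> (\<Sum>i\<in>UNIV. integral enclosing_box (?R i))"
    by (rule sum_mono) (rule integral_second_derivative_le)
  also have "\<dots> = integral enclosing_box (\<lambda>w. \<Sum>i\<in>UNIV. ?R i w)"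
    by (rule integral_sum[symmetric]) (simp_all only: finite integrable)
  also have "\<dots> = integral cylinder (\<lambda>w. (norm (Dx u w - c))\<^sup>2 * (\<phi> w * Dt \<phi> w)
        - 2 * ((Dx u w - c) \<bullet> Dx \<phi> w) * Dt u w * \<phi> w)"
    unfolding R by (rule integral_cylinder_eq_enclosing_box[symmetric]) (simp add: phi_eq_0)
  finally show ?thesis .
qed

lemma energy_estimate:
  assumes sol: "visc_sol p eps Om u" and eps: "eps > 0" and \<eta>: "\<eta> > 0"
  defines "K \<equiv> real CARD('n) + \<bar>p - 2\<bar>"
  shows "integral cylinder (\<lambda>w. Lap u w * Dt u w * (\<phi> w)\<^sup>2)
    \<le> \<eta> * integral cylinder (\<lambda>w. (norm (D2x u w))\<^sup>2 * (\<phi> w)\<^sup>2)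
      + (real CARD('n) * K + K\<^sup>2) / \<eta> * integral cylinder
          (\<lambda>w. (norm (Dx u w - c))\<^sup>2 * ((norm (Dx \<phi> w))\<^sup>2 + \<bar>\<phi> w * Dt \<phi> w\<bar>))"
    (is "integral cylinder ?f \<le> \<eta> * integral cylinder ?A + ?C / \<eta> * integral cylinder ?B")
proof -
  let ?g = "\<lambda>w. (norm (Dx u w - c))\<^sup>2 * (\<phi> w * Dt \<phi> w) - 2 * ((Dx u w - c) \<bullet> Dx \<phi> w) * Dt u w * \<phi> w"
  have K: "K > 0" by (simp add: K_def add_pos_nonneg)
  have Dt_le: "\<bar>Dt u w\<bar> \<le> K * norm (D2x u w)" if "w \<in> Om" for w
    using visc_sol_abs_Dt_le[OF sol open_Om eps _ that] smooth_u by (simp add: K_def smooth_on_def)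
  have Lap_le: "\<bar>Lap u w\<bar> \<le> real CARD('n) * norm (D2x u w)" for w
    unfolding Lap_def by (rule abs_trace_le)
  note continuity = continuous_intros isCont_u_derivatives isCont_phi_derivatives isCont_phi0
  have cont: "isCont ?f w" "isCont ?g w" "isCont ?A w" "isCont ?B w" if "w \<in> Om" for w
    by (insert that, intro continuity, simp_all)+
  have vanish: "?f w = 0" "?g w = 0" "?A w = 0" "?B w = 0" if "w \<notin> supp" for w
    by (simp_all add: phi_eq_0 Dx_phi_eq_0 that)
  show ?thesis
  proof (cases "real CARD('n) * K \<le> \<eta>")
    case True
    have B_nonneg: "0 \<le> ?C / \<eta> * ?B w" for w
      using K \<eta> by (intro mult_nonneg_nonneg divide_nonneg_pos add_nonneg_nonneg) auto
    have le: "?f w \<le> \<eta> * ?A w + ?C / \<eta> * ?B w" if "w \<in> Om" for w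
      using mult_le_of_abs_bounds[OF Lap_le Dt_le[OF that] True, of "\<phi> w"] B_nonneg[of w]
      by linarith
    show ?thesis
      by (intro integral_cylinder_le_combination cont vanish le)
  next
    case False
    have le: "?g w \<le> \<eta> * ?A w + ?C / \<eta> * ?B w" if "w \<in> Om" for w
      using young_energy_bound[OF Dt_le[OF that] K \<eta>, where M = "real CARD('n) * K"
          and a = "Dx u w - c" and b = "Dx \<phi> w" and f = "\<phi> w" and ft = "Dt \<phi> w"] False
      by simp
    have "integral cylinder ?g \<le> \<eta> * integral cylinder ?A + ?C / \<eta> * integral cylinder ?B"
      by (intro integral_cylinder_le_combination cont vanish le)
    then show ?thesis
      using integral_Lap_Dt_le[of c] by linarith
  qed
qed

end

theorem lemma4p3:
  fixes p :: real
  assumes n2: "CARD('n::finite) \<ge> 2"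
    and p_range: "(1 < p \<and> p < 2) \<or> 2 < p"
  shows "\<exists>C>0. \<forall>(\<Omega>::(real^'n) set) (T::real) (u::(real^'n) \<times> real \<Rightarrow> real)
            (U::(real^'n) set) (eps::real) (ue::(real^'n) \<times> real \<Rightarrow> real)
            (r::real) (s::real) (z::real^'n) (\<phi>::(real^'n) \<times> real \<Rightarrow> real)
            (c::real^'n) (\<eta>::real).
      domain \<Omega> \<and> T > 0
      \<and> visc_sol p 0 (\<Omega> \<times> {0<..<T}) u
      \<and> smooth_domain U \<and> compactly_contained U \<Omega>
      \<and> 0 < eps \<and> eps \<le> 1
      \<and> continuous_on (closure (U \<times> {0<..<T})) ue
      \<and> smooth_on (U \<times> {0<..<T}) ue
      \<and> visc_sol p eps (U \<times> {0<..<T}) ue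
      \<and> (\<forall>w\<in>par_boundary U T. ue w = u w)
      \<and> r > 0
      \<and> compactly_contained (ball z (2*r) \<times> {s - 4*r\<^sup>2<..<s}) (U \<times> {0<..<T})
      \<and> Cc_inf (ball z (2*r) \<times> {s - 4*r\<^sup>2<..<s + 4*r\<^sup>2}) \<phi>
      \<and> \<eta> > 0
      \<longrightarrow>
      integral (ball z (2*r) \<times> {s - 4*r\<^sup>2<..<s})
        (\<lambda>w. Lap ue w * Dt ue w * (\<phi> w)\<^sup>2)
      \<le> \<eta> * integral (ball z (2*r) \<times> {s - 4*r\<^sup>2<..<s})
              (\<lambda>w. (norm (D2x ue w))\<^sup>2 * (\<phi> w)\<^sup>2)
        + C / \<eta> * integral (ball z (2*r) \<times> {s - 4*r\<^sup>2<..<s})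
              (\<lambda>w. (norm (Dx ue w - c))\<^sup>2 * ((norm (Dx \<phi> w))\<^sup>2 + \<bar>\<phi> w * Dt \<phi> w\<bar>))"
proof -
  define K where "K = real CARD('n) + \<bar>p - 2\<bar>"
  have "real CARD('n) * K + K\<^sup>2 > 0"
    by (simp add: K_def add_pos_nonneg)
  then show ?thesis
  proof (intro exI[of _ "real CARD('n) * K + K\<^sup>2"] conjI allI impI, goal_cases)
    case (2 \<Omega> T u U eps ue r s z \<phi> c \<eta>)
    then have U: "smooth_domain U" and r: "r > 0"
      and ue: "smooth_on (U \<times> {0<..<T}) ue" "visc_sol p eps (U \<times> {0<..<T}) ue" "eps > 0"
      and Q: "compactly_contained (ball z (2*r) \<times> {s - 4*r\<^sup>2<..<s}) (U \<times> {0<..<T})"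
      and \<phi>: "Cc_inf (ball z (2*r) \<times> {s - 4*r\<^sup>2<..<s + 4*r\<^sup>2}) \<phi>" and \<eta>: "\<eta> > 0"
      by simp_all
    have "open (U \<times> {0<..<T})"
      using U by (simp add: smooth_domain_def domain_def open_Times)
    then interpret cutoff_cylinder "U \<times> {0<..<T}" ue \<phi> z "2*r" "s - 4*r\<^sup>2" s "s + 4*r\<^sup>2"
      using ue(1) Q \<phi> r by unfold_locales simp_all
    from energy_estimate[OF ue(2,3) \<eta>, of c] show ?case
      by (simp add: K_def)
  qed
qed

end
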